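(* Let $M$ be a closed affine $(n+1)$-dimensional manifold with developing pair $(\mathrm{dev},\mathrm{hol})$, $\Gamma=\pi_1(M,p)$, and suppose the affine holonomy admits a parallel (constant) vector field, i.e. there is a nonzero vector $v\in\mathbb{R}^{n+1}$ fixed by the linear part of every element of $\mathrm{hol}(\Gamma)$. Let $T_t(x)=x+tv$ be the associated translational flow on $\mathbb{A}^{n+1}$. Then there exists a complete flow $\widetilde\Theta_t$ on the universal cover $\widetilde M$, commuting with the deck group $\Gamma$, such that $\mathrm{dev}\circ\widetilde\Theta_t=T_t\circ\mathrm{dev}$ for all $t\in\mathbb{R}$. Moreover, there exist nonempty open subsets of $\widetilde M$ invariant under $\widetilde\Theta_t$ on which the restriction of $\mathrm{dev}$ is a diffeomorphism onto its image.
   Context: An $m$-dimensional affine manifold is a smooth $m$-manifold $M$ with an atlas of charts into $\mathbb{A}^m$ whose transition maps are, on each connected component of each overlap, restrictions of affine automorphisms. Such a structure determines a developing pair $(\mathrm{dev},\mathrm{hol})$: a local diffeomorphism $\mathrm{dev}:\widetilde M\to\mathbb{A}^m$ on the universal cover and a homomorphism $\mathrm{hol}:\Gamma=\pi_1(M,p)\to\mathrm{Aff}(m,\mathbb{R})$ with $\mathrm{dev}\circ\gamma=\mathrm{hol}(\gamma)\circ\mathrm{dev}$ for every deck transformation $\gamma\in\Gamma$. *)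

theory Defs
  imports "HOL-Analysis.Analysis"
begin

definition local_homeo :: "('x::topological_space \<Rightarrow> 'y::topological_space) \<Rightarrow> bool" where
  "local_homeo f \<longleftrightarrow>
     (\<forall>x. \<exists>U. open U \<and> x \<in> U \<and> open (f ` U) \<and> (\<exists>g. homeomorphism U (f ` U) f g))"

definition homeo_group :: "('x::topological_space \<Rightarrow> 'x) set \<Rightarrow> bool" where
  "homeo_group G \<longleftrightarrow> id \<in> G \<and>
     (\<forall>g\<in>G. \<forall>h\<in>G. g \<circ> h \<in> G) \<and>
     (\<forall>g\<in>G. \<exists>h\<in>G. g \<circ> h = id \<and> h \<circ> g = id) \<and>
     (\<forall>g\<in>G. continuous_on UNIV g)"

text \<open>Free, properly discontinuous action with compact quotient: then
  the orbit space is a closed manifold with fundamental group G and universal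
  cover the ambient space (when the space is simply connected).\<close>
definition free_action :: "('x \<Rightarrow> 'x) set \<Rightarrow> bool" where
  "free_action G \<longleftrightarrow> (\<forall>g\<in>G. \<forall>x. g x = x \<longrightarrow> g = id)"

definition properly_discontinuous :: "('x::topological_space \<Rightarrow> 'x) set \<Rightarrow> bool" where
  "properly_discontinuous G \<longleftrightarrow>
     (\<forall>K. compact K \<longrightarrow> finite {g\<in>G. g ` K \<inter> K \<noteq> {}})"

definition cocompact :: "('x::topological_space \<Rightarrow> 'x) set \<Rightarrow> bool" where
  "cocompact G \<longleftrightarrow> (\<exists>K. compact K \<and> (\<Union>g\<in>G. g ` K) = UNIV)"

end

theory Submission
  imports Defs
begin

(* Because the linear holonomy fixes v, every deck transformation g satisfies
   dev y = dev z + s v ==> dev (g y) = dev (g z) + s v: translation along v is compatible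
   with the deck group. The flow is obtained by lifting the straight lines t |-> dev x + t v
   through the local homeomorphism dev. Lifts are unique since dev is locally injective and
   the space is Hausdorff; uniqueness yields the group law and the commutation with the deck
   group. Lifts exist for all times because cocompactness provides flow boxes of one uniform
   size around every point: chart flow boxes around finitely many points of a compact
   fundamental domain, moved around by deck transformations.
   The invariant open set is the flow saturation of the preimage, in a chart, of a convex
   ball: two of its points with the same developing image lie on one flow line, and the
   segment joining their base points stays in the ball, hence lifts inside the chart. *)

lemma Hausdorff_space_euclidean_t2: "Hausdorff_space (euclidean :: 'a::t2_space topology)"
  unfolding Hausdorff_space_def disjnt_def using hausdorff by auto

lemma continuous_on_UNIV_if_locally:
  assumes "\<And>x. \<exists>N. open N \<and> x \<in> N \<and> continuous_on N f"
  shows "continuous_on UNIV f"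
proof -
  let ?S = "{N. open N \<and> continuous_on N f}"
  have "continuous_on (\<Union>?S) f"
    by (rule continuous_on_open_Union) auto
  moreover have "\<Union>?S = UNIV"
    using assms by blast
  ultimately show ?thesis
    by simp
qed

lemma continuous_on_funpow:
  fixes f :: "'a::topological_space \<Rightarrow> 'a"
  assumes "continuous_on UNIV f"
  shows "continuous_on UNIV (f ^^ n)"
proof (induction n)
  case (Suc n)
  have "continuous_on ((f ^^ n) ` UNIV) f"
    using assms by (rule continuous_on_subset) simp
  with Suc.IH show ?case
    unfolding funpow.simps(2) by (rule continuous_on_compose)
qed (simp add: continuous_on_id)

lemma local_homeo_continuous:
  assumes "local_homeo f"
  shows "continuous_on UNIV f"
proof (rule continuous_on_UNIV_if_locally)
  fix x
  obtain U g where "open U" "x \<in> U" "homeomorphism U (f ` U) f g"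
    using assms unfolding local_homeo_def by blast
  then show "\<exists>N. open N \<and> x \<in> N \<and> continuous_on N f"
    unfolding homeomorphism_def by blast
qed

lemma local_homeo_open_map:
  assumes "local_homeo f" "open S"
  shows "open (f ` S)"
proof -
  have "\<exists>T. open T \<and> y \<in> T \<and> T \<subseteq> f ` S" if "y \<in> f ` S" for y
  proof -
    from that obtain x where x: "x \<in> S" "y = f x" by blast
    obtain U g where U: "open U" "x \<in> U" "open (f ` U)" "homeomorphism U (f ` U) f g"
      using assms(1) unfolding local_homeo_def by blast
    have "openin (top_of_set U) (U \<inter> S)"
      using assms(2) U(1) by (simp add: openin_open_Int)
    then have "openin (top_of_set (f ` U)) (f ` (U \<inter> S))"
      using homeomorphism_imp_open_map[OF U(4)] by blast
    then have "open (f ` (U \<inter> S))"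
      using U(3) openin_open_trans by blast
    then show ?thesis
      using x U(2) by blast
  qed
  then show ?thesis
    by (meson open_subopen)
qed

lemma local_homeo_inj_on_homeomorphism:
  assumes f: "local_homeo f" and U: "open U" and inj: "inj_on f U"
  obtains g where "homeomorphism U (f ` U) f g"
proof (rule homeomorphism_injective_open_map[OF _ refl inj])
  show "continuous_on U f"
    using local_homeo_continuous[OF f] by (rule continuous_on_subset) simp
  fix S assume S: "openin (top_of_set U) S"
  then have "open (f ` S)"
    using U openin_open_trans local_homeo_open_map[OF f] by blast
  moreover have "f ` S \<subseteq> f ` U"
    using S openin_imp_subset by blast
  ultimately show "openin (top_of_set (f ` U)) (f ` S)"
    by (metis inf.absorb_iff2 openin_open_Int)
qed

definition is_lift ::
    "('x::topological_space \<Rightarrow> 'y) \<Rightarrow> 'a::topological_space set \<Rightarrow> ('a \<Rightarrow> 'y) \<Rightarrow> ('a \<Rightarrow> 'x) \<Rightarrow> bool"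
  where "is_lift f I \<gamma> c \<longleftrightarrow> continuous_on I c \<and> (\<forall>t\<in>I. f (c t) = \<gamma> t)"

lemma is_lift_subset: "is_lift f I \<gamma> c \<Longrightarrow> J \<subseteq> I \<Longrightarrow> is_lift f J \<gamma> c"
  unfolding is_lift_def by (auto intro: continuous_on_subset)

lemma is_lift_join:
  fixes c1 c2 :: "real \<Rightarrow> 'x::topological_space"
  assumes c1: "is_lift f {a..b} \<gamma> c1" and c2: "is_lift f {b..c} \<gamma> c2" and "c1 b = c2 b"
  shows "is_lift f {a..c} \<gamma> (\<lambda>t. if t \<le> b then c1 t else c2 t)"
  unfolding is_lift_def
proof
  have "continuous_on {t \<in> {a..c}. t \<le> b} c1" "continuous_on {t \<in> {a..c}. b \<le> t} c2"
    using c1 c2 unfolding is_lift_def by (auto elim: continuous_on_subset)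
  then show "continuous_on {a..c} (\<lambda>t. if t \<le> b then c1 t else c2 t)"
    using \<open>c1 b = c2 b\<close> by (intro continuous_on_cases_le continuous_on_id) auto
  show "\<forall>t\<in>{a..c}. f (if t \<le> b then c1 t else c2 t) = \<gamma> t"
    using c1 c2 unfolding is_lift_def by simp
qed

text \<open>Lifts through a local homeomorphism into a Hausdorff space are unique: the set where
  two lifts agree is closed by Hausdorffness and open by local injectivity.\<close>
lemma lift_unique:
  fixes f :: "'x::t2_space \<Rightarrow> 'y::topological_space"
  assumes f: "local_homeo f" and I: "connected I"
    and c1: "is_lift f I \<gamma> c1" and c2: "is_lift f I \<gamma> c2"
    and t0: "t0 \<in> I" "c1 t0 = c2 t0" and t: "t \<in> I"
  shows "c1 t = c2 t"
proof -
  let ?A = "{t \<in> I. c1 t = c2 t}"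
  have cont: "continuous_on I c1" "continuous_on I c2"
    using c1 c2 unfolding is_lift_def by auto
  have "closedin (top_of_set I) ?A"
    using closedin_continuous_maps_eq[of "euclidean::'x topology" "top_of_set I" c1 c2]
    by (simp add: Hausdorff_space_euclidean_t2 continuous_map_iff_continuous cont)
  moreover have "openin (top_of_set I) ?A"
  proof (subst openin_subopen, intro ballI)
    fix s assume s: "s \<in> ?A"
    obtain U g where U: "open U" "c1 s \<in> U" "homeomorphism U (f ` U) f g"
      using f unfolding local_homeo_def by blast
    have inj: "inj_on f U"
      using U(3) by (metis homeomorphism_def inj_on_inverseI)
    let ?T = "(I \<inter> c1 -` U) \<inter> (I \<inter> c2 -` U)"
    have "openin (top_of_set I) ?T"
      using cont U(1) continuous_openin_preimage_eq by blast
    moreover have "?T \<subseteq> ?A"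
      using inj c1 c2 unfolding is_lift_def inj_on_def by auto
    ultimately show "\<exists>T. openin (top_of_set I) T \<and> s \<in> T \<and> T \<subseteq> ?A"
      using s U(2) by auto
  qed
  ultimately have "?A = I"
    using I t0 unfolding connected_clopen by blast
  then show ?thesis
    using t by blast
qed

lemma lift_on_UNIV_if_lifts_on_intervals:
  fixes f :: "'x::t2_space \<Rightarrow> 'y::topological_space"
    and \<gamma> :: "real \<Rightarrow> 'y"
  assumes f: "local_homeo f"
    and lifts: "\<And>T. \<exists>c. is_lift f {-T..T} \<gamma> c \<and> c 0 = x"
  shows "\<exists>c. is_lift f UNIV \<gamma> c \<and> c 0 = x"
proof -
  obtain C where C: "\<And>T. is_lift f {-T..T} \<gamma> (C T)" and C0: "\<And>T. C T 0 = x"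
    using lifts by metis
  have interval: "t \<in> {-T..T} \<longleftrightarrow> \<bar>t\<bar> \<le> T" "t \<in> {-T<..<T} \<longleftrightarrow> \<bar>t\<bar> < T" for t T :: real
    by (auto simp: abs_le_iff abs_less_iff)
  define c where "c t = C (\<bar>t\<bar> + 1) t" for t
  have agree: "C T t = c t" if "\<bar>t\<bar> < T" for T t
  proof -
    let ?I = "{-\<bar>t\<bar>..\<bar>t\<bar>}"
    have lift_T: "is_lift f ?I \<gamma> (C T)"
      by (rule is_lift_subset[OF C]) (use that in \<open>auto simp: interval\<close>)
    have lift_t: "is_lift f ?I \<gamma> (C (\<bar>t\<bar> + 1))"
      by (rule is_lift_subset[OF C]) (auto simp: interval)
    have "t \<in> ?I" "0 \<in> ?I"
      by (subst interval(1), simp)+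
    have "C T t = C (\<bar>t\<bar> + 1) t"
      by (rule lift_unique[OF f connected_Icc lift_T lift_t \<open>0 \<in> ?I\<close> _ \<open>t \<in> ?I\<close>]) (simp add: C0)
    then show ?thesis
      by (simp add: c_def)
  qed
  have "continuous_on {-T<..<T} c" for T
  proof (rule continuous_on_eq)
    have "{-T<..<T} \<subseteq> {-T..T}"
      by auto
    then show "continuous_on {-T<..<T} (C T)"
      using C[of T] continuous_on_subset unfolding is_lift_def by blast
    show "C T t = c t" if "t \<in> {-T<..<T}" for t
      by (rule agree) (use that interval(2) in blast)
  qed
  then have "continuous_on (\<Union>T. {-T<..<T}) c"
    by (intro continuous_on_open_Union) auto
  moreover have "(\<Union>T. {-T<..<T}) = (UNIV :: real set)"
  proof -
    have "t \<in> {-(\<bar>t\<bar> + 1)<..<\<bar>t\<bar> + 1}" for t :: real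
      by (subst interval(2)) simp
    then show ?thesis
      by blast
  qed
  moreover have "f (c t) = \<gamma> t" for t
  proof -
    have "t \<in> {-(\<bar>t\<bar> + 1)..\<bar>t\<bar> + 1}"
      by (subst interval(1)) simp
    then show ?thesis
      using C[of "\<bar>t\<bar> + 1"] unfolding c_def is_lift_def by blast
  qed
  ultimately have "is_lift f UNIV \<gamma> c"
    unfolding is_lift_def by simp
  moreover have "c 0 = x"
    by (simp add: c_def C0)
  ultimately show ?thesis
    by blast
qed

locale parallel_affine_holonomy =
  fixes dev :: "'x::t2_space \<Rightarrow> real ^ 'n"
    and G :: "('x \<Rightarrow> 'x) set"
    and L :: "('x \<Rightarrow> 'x) \<Rightarrow> real ^ 'n ^ 'n"
    and b :: "('x \<Rightarrow> 'x) \<Rightarrow> real ^ 'n"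
    and v :: "real ^ 'n"
  assumes dev: "local_homeo dev"
    and group: "homeo_group G" and cocompact: "cocompact G"
    and holonomy: "\<forall>g\<in>G. \<forall>x. dev (g x) = L g *v dev x + b g"
    and v_nonzero: "v \<noteq> 0" and v_fixed: "\<forall>g\<in>G. L g *v v = v"
begin

lemma group_inverse: "g \<in> G \<Longrightarrow> \<exists>h\<in>G. g \<circ> h = id \<and> h \<circ> g = id"
  using group unfolding homeo_group_def by blast

lemma continuous_group: "g \<in> G \<Longrightarrow> continuous_on UNIV g"
  using group unfolding homeo_group_def by blast

lemma dev_group_translate:
  assumes "g \<in> G" "dev y = dev z + s *\<^sub>R v"
  shows "dev (g y) = dev (g z) + s *\<^sub>R v"
proof -
  have "dev (g y) = L g *v (dev z + s *\<^sub>R v) + b g"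
    using holonomy assms by simp
  also have "\<dots> = dev (g z) + s *\<^sub>R v"
    using holonomy v_fixed assms(1)
    by (simp add: matrix_vector_right_distrib matrix_vector_mult_scaleR algebra_simps)
  finally show ?thesis .
qed

definition flow_box :: "real \<Rightarrow> 'x set \<Rightarrow> (real \<times> 'x \<Rightarrow> 'x) \<Rightarrow> bool" where
  "flow_box \<delta> N \<phi> \<longleftrightarrow> open N \<and> continuous_on ({-\<delta>..\<delta>} \<times> N) \<phi> \<and>
     (\<forall>z\<in>N. \<phi> (0, z) = z \<and> (\<forall>s\<in>{-\<delta>..\<delta>}. dev (\<phi> (s, z)) = dev z + s *\<^sub>R v))"

lemma flow_box_mono:
  assumes "flow_box \<delta> N \<phi>" "\<delta>' \<le> \<delta>"
  shows "flow_box \<delta>' N \<phi>"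
proof -
  have "{-\<delta>'..\<delta>'} \<times> N \<subseteq> {-\<delta>..\<delta>} \<times> N"
    using assms(2) by auto
  then show ?thesis
    using assms(1) continuous_on_subset[of "{-\<delta>..\<delta>} \<times> N" \<phi>] assms(2)
    unfolding flow_box_def by simp
qed

lemma chart_flow_box:
  assumes h: "homeomorphism V (dev ` V) dev h" and N: "open N" "N \<subseteq> V"
    and in_chart: "\<And>z s. z \<in> N \<Longrightarrow> s \<in> {-\<rho>..\<rho>} \<Longrightarrow> dev z + s *\<^sub>R v \<in> dev ` V"
  shows "flow_box \<rho> N (\<lambda>(s, z). h (dev z + s *\<^sub>R v))"
  unfolding flow_box_def
proof (intro conjI ballI)
  show "open N"
    by (rule N(1))
  have "continuous_on (dev ` V) h"
    using h unfolding homeomorphism_def by blast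
  moreover have "continuous_on ({-\<rho>..\<rho>} \<times> N) (\<lambda>p. dev (snd p))"
    by (rule continuous_on_compose2[OF local_homeo_continuous[OF dev]
          continuous_on_snd[OF continuous_on_id] subset_UNIV])
  then have "continuous_on ({-\<rho>..\<rho>} \<times> N) (\<lambda>p. dev (snd p) + fst p *\<^sub>R v)"
    by (intro continuous_intros)
  moreover have "(\<lambda>p. dev (snd p) + fst p *\<^sub>R v) ` ({-\<rho>..\<rho>} \<times> N) \<subseteq> dev ` V"
    using in_chart by force
  ultimately show "continuous_on ({-\<rho>..\<rho>} \<times> N) (\<lambda>(s, z). h (dev z + s *\<^sub>R v))"
    unfolding case_prod_beta by (rule continuous_on_compose2)
  fix z assume "z \<in> N"
  then show "(\<lambda>(s, z). h (dev z + s *\<^sub>R v)) (0, z) = z"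
    using h N(2) unfolding homeomorphism_def by auto
  fix s assume "s \<in> {-\<rho>..\<rho>}"
  then show "dev ((\<lambda>(s, z). h (dev z + s *\<^sub>R v)) (s, z)) = dev z + s *\<^sub>R v"
    using in_chart[OF \<open>z \<in> N\<close>] h homeomorphism_apply2 by fastforce
qed

lemma flow_box_at: "\<exists>\<rho>>0. \<exists>N \<phi>. y \<in> N \<and> flow_box \<rho> N \<phi>"
proof -
  obtain V h where V: "open V" "y \<in> V" "open (dev ` V)" "homeomorphism V (dev ` V) dev h"
    using dev unfolding local_homeo_def by blast
  obtain r where r: "r > 0" "ball (dev y) r \<subseteq> dev ` V"
    using V(2,3) open_contains_ball by blast
  define N where "N = V \<inter> dev -` ball (dev y) (r / 2)"
  define \<rho> where "\<rho> = r / (2 * norm v)"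
  have "norm v > 0"
    using v_nonzero by simp
  then have "\<rho> > 0"
    using r(1) by (simp add: \<rho>_def)
  have "dev z + s *\<^sub>R v \<in> dev ` V" if "z \<in> N" "s \<in> {-\<rho>..\<rho>}" for z s
  proof -
    have "\<bar>s\<bar> \<le> \<rho>"
      using that(2) by (simp add: abs_le_iff)
    then have "norm (s *\<^sub>R v) \<le> \<rho> * norm v"
      using \<open>norm v > 0\<close> by (simp add: mult_right_mono)
    also have "\<dots> = r / 2"
      using \<open>norm v > 0\<close> by (simp add: \<rho>_def)
    finally have "norm (s *\<^sub>R v) \<le> r / 2" .
    moreover have "dist (dev y) (dev z) < r / 2"
      using that(1) by (simp add: N_def)
    moreover have "dist (dev z) (dev z + s *\<^sub>R v) = norm (s *\<^sub>R v)"
      by (simp add: dist_norm)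
    ultimately have "dist (dev y) (dev z + s *\<^sub>R v) < r"
      using dist_triangle[of "dev y" "dev z + s *\<^sub>R v" "dev z"] by linarith
    then show ?thesis
      using r(2) by auto
  qed
  moreover have "open N"
    unfolding N_def by (intro open_Int V(1) open_vimage open_ball local_homeo_continuous[OF dev])
  ultimately have "flow_box \<rho> N (\<lambda>(s, z). h (dev z + s *\<^sub>R v))"
    by (intro chart_flow_box[OF V(4)]) (auto simp: N_def)
  moreover have "y \<in> N"
    using V(2) r(1) by (simp add: N_def)
  ultimately show ?thesis
    using \<open>\<rho> > 0\<close> by blast
qed

lemma flow_box_image:
  assumes box: "flow_box \<delta> N \<phi>" and g: "g \<in> G"
  shows "flow_box \<delta> (g ` N) (\<lambda>(s, z). g (\<phi> (s, inv g z)))"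
proof -
  obtain g' where g': "g' \<in> G" "g \<circ> g' = id" "g' \<circ> g = id"
    using group_inverse[OF g] by blast
  have inv_g: "inv g = g'"
    using g'(2,3) by (simp add: inv_unique_comp)
  have g_g': "g (g' z) = z" "g' (g z) = z" for z
    using g'(2,3) by (simp_all add: pointfree_idE)
  have image: "g ` N = g' -` N"
    using bij_vimage_eq_inv_image[OF o_bij[OF g'(2,3)]] inv_unique_comp[OF g'(3,2)] by simp
  have box_N: "open N" "continuous_on ({-\<delta>..\<delta>} \<times> N) \<phi>"
      "\<And>z. z \<in> N \<Longrightarrow> \<phi> (0, z) = z"
      "\<And>z s. z \<in> N \<Longrightarrow> s \<in> {-\<delta>..\<delta>} \<Longrightarrow> dev (\<phi> (s, z)) = dev z + s *\<^sub>R v"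
    using box unfolding flow_box_def by auto
  show ?thesis
    unfolding flow_box_def inv_g image
  proof (intro conjI ballI)
    show "open (g' -` N)"
      by (rule open_vimage[OF box_N(1) continuous_group[OF g'(1)]])
    have "continuous_on ({-\<delta>..\<delta>} \<times> g' -` N) (\<lambda>p. g' (snd p))"
      by (rule continuous_on_compose2[OF continuous_group[OF g'(1)]
            continuous_on_snd[OF continuous_on_id] subset_UNIV])
    then have "continuous_on ({-\<delta>..\<delta>} \<times> g' -` N) (\<lambda>p. (fst p, g' (snd p)))"
      by (intro continuous_on_Pair continuous_on_fst continuous_on_id)
    moreover have "(\<lambda>p. (fst p, g' (snd p))) ` ({-\<delta>..\<delta>} \<times> g' -` N) \<subseteq> {-\<delta>..\<delta>} \<times> N"
      by auto
    ultimately have "continuous_on ({-\<delta>..\<delta>} \<times> g' -` N) (\<lambda>p. \<phi> (fst p, g' (snd p)))"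
      by (rule continuous_on_compose2[OF box_N(2)])
    then show "continuous_on ({-\<delta>..\<delta>} \<times> g' -` N) (\<lambda>(s, z). g (\<phi> (s, g' z)))"
      unfolding case_prod_beta
      by (rule continuous_on_compose2[OF continuous_group[OF g] _ subset_UNIV])
  next
    fix z assume z: "z \<in> g' -` N"
    then show "(\<lambda>(s, z). g (\<phi> (s, g' z))) (0, z) = z"
      using box_N(3) g_g' by simp
    fix s assume "s \<in> {-\<delta>..\<delta>}"
    then have "dev (\<phi> (s, g' z)) = dev (g' z) + s *\<^sub>R v"
      using box_N(4) z by simp
    then show "dev ((\<lambda>(s, z). g (\<phi> (s, g' z))) (s, z)) = dev z + s *\<^sub>R v"
      using dev_group_translate[OF g] g_g' by simp
  qed
qed

lemma uniform_flow_box: "\<exists>\<delta>>0. \<forall>x. \<exists>N \<phi>. x \<in> N \<and> flow_box \<delta> N \<phi>"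
proof -
  obtain \<rho> N \<phi> where box: "\<And>y. \<rho> y > 0" "\<And>y. y \<in> N y" "\<And>y. flow_box (\<rho> y) (N y) (\<phi> y)"
    using flow_box_at by metis
  obtain K where K: "compact K" "(\<Union>g\<in>G. g ` K) = UNIV"
    using cocompact unfolding cocompact_def by blast
  have "open (N y)" for y
    using box(3) unfolding flow_box_def by blast
  moreover have "K \<subseteq> (\<Union>y\<in>K. N y)"
    using box(2) by blast
  ultimately obtain F where F: "F \<subseteq> K" "finite F" "K \<subseteq> (\<Union>y\<in>F. N y)"
    by (rule compactE_image[OF K(1)])
  define \<delta> where "\<delta> = Min (insert 1 (\<rho> ` F))"
  have "\<delta> > 0"
    unfolding \<delta>_def by (subst Min_gr_iff) (use F(2) box(1) in auto)
  moreover have "\<exists>N \<phi>. x \<in> N \<and> flow_box \<delta> N \<phi>" for x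
  proof -
    obtain g k where gk: "g \<in> G" "k \<in> K" "x = g k"
      using K(2) by blast
    obtain y where y: "y \<in> F" "k \<in> N y"
      using F(3) gk(2) by blast
    have "\<delta> \<le> \<rho> y"
      unfolding \<delta>_def by (rule Min_le) (use F(2) y(1) in auto)
    then have "flow_box \<delta> (N y) (\<phi> y)"
      by (rule flow_box_mono[OF box(3)])
    then have "flow_box \<delta> (g ` N y) (\<lambda>(s, z). g (\<phi> y (s, inv g z)))"
      using gk(1) by (rule flow_box_image)
    moreover have "x \<in> g ` N y"
      using gk(3) y(2) by blast
    ultimately show ?thesis
      by blast
  qed
  ultimately show ?thesis
    by blast
qed

lemma flow_box_lift:
  assumes box: "flow_box \<delta> N \<phi>" and y: "y \<in> N" "dev y = dev x + a *\<^sub>R v"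
  shows "is_lift dev {a - \<delta>..a + \<delta>} (\<lambda>t. dev x + t *\<^sub>R v) (\<lambda>t. \<phi> (t - a, y))"
  unfolding is_lift_def
proof
  have "continuous_on ({-\<delta>..\<delta>} \<times> N) \<phi>"
    using box unfolding flow_box_def by blast
  moreover have "continuous_on {a - \<delta>..a + \<delta>} (\<lambda>t. (t - a, y))"
    by (intro continuous_intros)
  moreover have "(\<lambda>t. (t - a, y)) ` {a - \<delta>..a + \<delta>} \<subseteq> {-\<delta>..\<delta>} \<times> N"
    using y(1) by auto
  ultimately show "continuous_on {a - \<delta>..a + \<delta>} (\<lambda>t. \<phi> (t - a, y))"
    by (rule continuous_on_compose2)
  show "\<forall>t\<in>{a - \<delta>..a + \<delta>}. dev (\<phi> (t - a, y)) = dev x + t *\<^sub>R v"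
  proof
    fix t assume "t \<in> {a - \<delta>..a + \<delta>}"
    then have "dev (\<phi> (t - a, y)) = dev y + (t - a) *\<^sub>R v"
      using box y(1) unfolding flow_box_def by auto
    also have "\<dots> = dev x + t *\<^sub>R v"
      using y(2) by (simp add: algebra_simps)
    finally show "dev (\<phi> (t - a, y)) = dev x + t *\<^sub>R v" .
  qed
qed

lemma ray_lift_extend:
  assumes boxes: "\<forall>y. \<exists>N \<phi>. y \<in> N \<and> flow_box \<delta> N \<phi>" and "0 \<le> \<delta>"
    and c: "is_lift dev {-T..T} (\<lambda>t. dev x + t *\<^sub>R v) c" "c 0 = x" and "0 \<le> T"
  shows "\<exists>c'. is_lift dev {-(T + \<delta>)..T + \<delta>} (\<lambda>t. dev x + t *\<^sub>R v) c' \<and> c' 0 = x"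
proof -
  let ?\<gamma> = "\<lambda>t. dev x + t *\<^sub>R v"
  have dev_c: "dev (c t) = dev x + t *\<^sub>R v" if "t \<in> {-T..T}" for t
    using c(1) that unfolding is_lift_def by blast
  obtain Nr \<phi>r where box_r: "c T \<in> Nr" "flow_box \<delta> Nr \<phi>r"
    using boxes by blast
  obtain Nl \<phi>l where box_l: "c (-T) \<in> Nl" "flow_box \<delta> Nl \<phi>l"
    using boxes by blast
  have "is_lift dev {T - \<delta>..T + \<delta>} ?\<gamma> (\<lambda>t. \<phi>r (t - T, c T))"
    using \<open>0 \<le> T\<close> by (intro flow_box_lift[OF box_r(2,1)] dev_c) auto
  then have right: "is_lift dev {T..T + \<delta>} ?\<gamma> (\<lambda>t. \<phi>r (t - T, c T))"
    by (rule is_lift_subset) (use \<open>0 \<le> \<delta>\<close> in auto)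
  have "is_lift dev {-T - \<delta>..-T + \<delta>} ?\<gamma> (\<lambda>t. \<phi>l (t - -T, c (-T)))"
    using \<open>0 \<le> T\<close> by (intro flow_box_lift[OF box_l(2,1)] dev_c) auto
  then have left: "is_lift dev {-(T + \<delta>)..-T} ?\<gamma> (\<lambda>t. \<phi>l (t - -T, c (-T)))"
    by (rule is_lift_subset) (use \<open>0 \<le> \<delta>\<close> in auto)
  have base: "\<phi>r (0, c T) = c T" "\<phi>l (0, c (-T)) = c (-T)"
    using box_r box_l unfolding flow_box_def by auto
  define cr where "cr t = (if t \<le> T then c t else \<phi>r (t - T, c T))" for t
  define c' where "c' t = (if t \<le> -T then \<phi>l (t - -T, c (-T)) else cr t)" for t
  have "is_lift dev {-T..T + \<delta>} ?\<gamma> cr"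
    unfolding cr_def by (rule is_lift_join[OF c(1) right]) (simp add: base)
  then have "is_lift dev {-(T + \<delta>)..T + \<delta>} ?\<gamma> c'"
    unfolding c'_def
    by (rule is_lift_join[OF left]) (use \<open>0 \<le> T\<close> base in \<open>simp add: cr_def\<close>)
  moreover have "c' 0 = x"
    using \<open>0 \<le> T\<close> base c(2) by (cases "T = 0") (simp_all add: c'_def cr_def)
  ultimately show ?thesis
    by blast
qed

lemma ray_lift_on_interval: "\<exists>c. is_lift dev {-T..T} (\<lambda>t. dev x + t *\<^sub>R v) c \<and> c 0 = x"
proof -
  let ?\<gamma> = "\<lambda>t. dev x + t *\<^sub>R v"
  obtain \<delta> where \<delta>: "\<delta> > 0" and boxes: "\<forall>y. \<exists>N \<phi>. y \<in> N \<and> flow_box \<delta> N \<phi>"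
    using uniform_flow_box by blast
  have lifts: "\<exists>c. is_lift dev {-(real n * \<delta>)..real n * \<delta>} ?\<gamma> c \<and> c 0 = x" for n
  proof (induction n)
    case 0
    have "is_lift dev {0..0} ?\<gamma> (\<lambda>_. x)"
      unfolding is_lift_def by simp
    then show ?case
      by auto
  next
    case (Suc n)
    then obtain c where c: "is_lift dev {-(real n * \<delta>)..real n * \<delta>} ?\<gamma> c" "c 0 = x"
      by blast
    have "0 \<le> real n * \<delta>"
      using \<delta> by simp
    then have "\<exists>c'. is_lift dev {-(real n * \<delta> + \<delta>)..real n * \<delta> + \<delta>} ?\<gamma> c' \<and> c' 0 = x"
      by (rule ray_lift_extend[OF boxes less_imp_le[OF \<delta>] c])
    then show ?case
      by (simp add: algebra_simps)
  qed
  obtain n where "T < real n * \<delta>"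
    using reals_Archimedean3[OF \<delta>] by blast
  then have "{-T..T} \<subseteq> {-(real n * \<delta>)..real n * \<delta>}"
    by auto
  then show ?thesis
    using lifts[of n] is_lift_subset by blast
qed

definition flow :: "real \<Rightarrow> 'x \<Rightarrow> 'x" where
  "flow t x = (SOME c. is_lift dev UNIV (\<lambda>t. dev x + t *\<^sub>R v) c \<and> c 0 = x) t"

lemma flow_is_lift: "is_lift dev UNIV (\<lambda>t. dev x + t *\<^sub>R v) (\<lambda>t. flow t x)" "flow 0 x = x"
proof -
  have "\<exists>c. is_lift dev UNIV (\<lambda>t. dev x + t *\<^sub>R v) c \<and> c 0 = x"
    by (rule lift_on_UNIV_if_lifts_on_intervals[OF dev ray_lift_on_interval])
  then have "is_lift dev UNIV (\<lambda>t. dev x + t *\<^sub>R v) (\<lambda>t. flow t x) \<and> flow 0 x = x"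
    unfolding flow_def by (rule someI_ex)
  then show "is_lift dev UNIV (\<lambda>t. dev x + t *\<^sub>R v) (\<lambda>t. flow t x)" "flow 0 x = x"
    by blast+
qed

lemma dev_flow: "dev (flow t x) = dev x + t *\<^sub>R v"
  using flow_is_lift(1) unfolding is_lift_def by blast

lemma continuous_on_flow_orbit: "continuous_on UNIV (\<lambda>t. flow t x)"
  using flow_is_lift(1) unfolding is_lift_def by blast

lemma flow_unique:
  assumes "connected I" "0 \<in> I" "t \<in> I"
    and c: "is_lift dev I (\<lambda>t. dev x + t *\<^sub>R v) c" "c 0 = x"
  shows "flow t x = c t"
proof (rule lift_unique[OF dev assms(1) _ c(1) assms(2) _ assms(3)])
  show "is_lift dev I (\<lambda>t. dev x + t *\<^sub>R v) (\<lambda>t. flow t x)"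
    by (rule is_lift_subset[OF flow_is_lift(1) subset_UNIV])
  show "flow 0 x = c 0"
    by (simp add: flow_is_lift(2) c(2))
qed

lemma flow_zero: "flow 0 = id"
  using flow_is_lift(2) by auto

lemma flow_add: "flow (s + t) = flow s \<circ> flow t"
proof
  fix x
  have "is_lift dev UNIV (\<lambda>r. dev (flow t x) + r *\<^sub>R v) (\<lambda>r. flow (r + t) x)"
    unfolding is_lift_def
  proof
    show "continuous_on UNIV (\<lambda>r. flow (r + t) x)"
      by (rule continuous_on_compose2[OF continuous_on_flow_orbit]) (auto intro: continuous_intros)
    show "\<forall>r\<in>UNIV. dev (flow (r + t) x) = dev (flow t x) + r *\<^sub>R v"
      by (simp add: dev_flow algebra_simps)
  qed
  then have "flow s (flow t x) = flow (s + t) x"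
    by (rule flow_unique[OF connected_UNIV UNIV_I UNIV_I]) simp
  then show "flow (s + t) x = (flow s \<circ> flow t) x"
    by simp
qed

lemma flow_commute:
  assumes "g \<in> G"
  shows "flow t \<circ> g = g \<circ> flow t"
proof
  fix x
  have "is_lift dev UNIV (\<lambda>r. dev (g x) + r *\<^sub>R v) (\<lambda>r. g (flow r x))"
    unfolding is_lift_def
  proof
    show "continuous_on UNIV (\<lambda>r. g (flow r x))"
      by (rule continuous_on_compose2[OF continuous_group[OF assms] continuous_on_flow_orbit subset_UNIV])
    show "\<forall>r\<in>UNIV. dev (g (flow r x)) = dev (g x) + r *\<^sub>R v"
      using dev_group_translate[OF assms dev_flow] by blast
  qed
  then have "flow t (g x) = g (flow t x)"
    by (rule flow_unique[OF connected_UNIV UNIV_I UNIV_I]) (simp add: flow_is_lift(2))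
  then show "(flow t \<circ> g) x = (g \<circ> flow t) x"
    by simp
qed

lemma flow_eq_flow_box:
  assumes box: "flow_box \<delta> N \<phi>" and "z \<in> N" "s \<in> {-\<delta>..\<delta>}"
  shows "flow s z = \<phi> (s, z)"
proof -
  have "is_lift dev {0 - \<delta>..0 + \<delta>} (\<lambda>t. dev z + t *\<^sub>R v) (\<lambda>t. \<phi> (t - 0, z))"
    by (rule flow_box_lift[OF box \<open>z \<in> N\<close>]) simp
  then have "is_lift dev {-\<delta>..\<delta>} (\<lambda>t. dev z + t *\<^sub>R v) (\<lambda>t. \<phi> (t, z))"
    by simp
  moreover have "\<phi> (0, z) = z"
    using box \<open>z \<in> N\<close> unfolding flow_box_def by blast
  moreover have "0 \<in> {-\<delta>..\<delta>}"
    using \<open>s \<in> {-\<delta>..\<delta>}\<close> by auto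
  ultimately show ?thesis
    using flow_unique[OF connected_Icc _ \<open>s \<in> {-\<delta>..\<delta>}\<close>] by blast
qed

lemma flow_in_chart:
  assumes h: "homeomorphism V (dev ` V) dev h" and "z \<in> V"
    and segment: "closed_segment (dev z) (dev z + s *\<^sub>R v) \<subseteq> dev ` V"
  shows "flow s z = h (dev z + s *\<^sub>R v)"
proof -
  let ?\<gamma> = "\<lambda>u. dev z + (u * s) *\<^sub>R v"
  have in_chart: "?\<gamma> u \<in> dev ` V" if "u \<in> {0..1}" for u
  proof -
    have "?\<gamma> u = (1 - u) *\<^sub>R dev z + u *\<^sub>R (dev z + s *\<^sub>R v)"
      by (simp add: algebra_simps)
    then have "?\<gamma> u \<in> closed_segment (dev z) (dev z + s *\<^sub>R v)"
      using that unfolding closed_segment_def by auto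
    then show ?thesis
      using segment by blast
  qed
  have lift_flow: "is_lift dev {0..1} ?\<gamma> (\<lambda>u. flow (u * s) z)"
    unfolding is_lift_def
  proof
    show "continuous_on {0..1} (\<lambda>u. flow (u * s) z)"
      by (rule continuous_on_compose2[OF continuous_on_flow_orbit _ subset_UNIV])
        (intro continuous_intros)
    show "\<forall>u\<in>{0..1}. dev (flow (u * s) z) = ?\<gamma> u"
      by (simp add: dev_flow)
  qed
  have lift_chart: "is_lift dev {0..1} ?\<gamma> (\<lambda>u. h (?\<gamma> u))"
    unfolding is_lift_def
  proof
    have "continuous_on (dev ` V) h"
      using h unfolding homeomorphism_def by blast
    moreover have "continuous_on {0..1} ?\<gamma>"
      by (intro continuous_intros)
    ultimately show "continuous_on {0..1} (\<lambda>u. h (?\<gamma> u))"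
      by (rule continuous_on_compose2) (use in_chart in auto)
    show "\<forall>u\<in>{0..1}. dev (h (?\<gamma> u)) = ?\<gamma> u"
      using in_chart homeomorphism_apply2[OF h] by blast
  qed
  have "flow (0 * s) z = h (?\<gamma> 0)"
    by (simp add: flow_is_lift(2) homeomorphism_apply1[OF h \<open>z \<in> V\<close>])
  then have "flow (1 * s) z = h (?\<gamma> 1)"
    by (rule lift_unique[OF dev connected_Icc lift_flow lift_chart, rotated]) auto
  then show ?thesis
    by simp
qed

lemma continuous_on_flow_short:
  assumes boxes: "\<forall>y. \<exists>N \<phi>. y \<in> N \<and> flow_box \<delta> N \<phi>" and s: "s \<in> {-\<delta>..\<delta>}"
  shows "continuous_on UNIV (flow s)"
proof (rule continuous_on_UNIV_if_locally)
  fix x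
  obtain N \<phi> where box: "x \<in> N" "flow_box \<delta> N \<phi>"
    using boxes by blast
  have "continuous_on ({-\<delta>..\<delta>} \<times> N) \<phi>"
    using box(2) unfolding flow_box_def by blast
  moreover have "continuous_on N (\<lambda>z. (s, z))"
    by (intro continuous_intros)
  moreover have "(\<lambda>z. (s, z)) ` N \<subseteq> {-\<delta>..\<delta>} \<times> N"
    using s by auto
  ultimately have "continuous_on N (\<lambda>z. \<phi> (s, z))"
    by (rule continuous_on_compose2)
  then have "continuous_on N (flow s)"
    by (rule continuous_on_eq) (simp add: flow_eq_flow_box[OF box(2) _ s])
  then show "\<exists>N. open N \<and> x \<in> N \<and> continuous_on N (flow s)"
    using box unfolding flow_box_def by blast
qed

lemma flow_funpow: "flow (real n * s) = flow s ^^ n"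
proof (induction n)
  case 0
  then show ?case
    by (simp add: flow_zero)
next
  case (Suc n)
  have "flow (real (Suc n) * s) = flow s \<circ> flow (real n * s)"
    by (simp add: flow_add[symmetric] algebra_simps)
  then show ?case
    by (simp add: Suc.IH)
qed

lemma continuous_on_flow: "continuous_on UNIV (flow t)"
proof -
  obtain \<delta> where \<delta>: "\<delta> > 0" and boxes: "\<forall>y. \<exists>N \<phi>. y \<in> N \<and> flow_box \<delta> N \<phi>"
    using uniform_flow_box by blast
  obtain n where n: "\<bar>t\<bar> < real n * \<delta>"
    using reals_Archimedean3[OF \<delta>] by blast
  then have "n > 0"
    by (cases n) auto
  have "-(real n * \<delta>) < t" "t < real n * \<delta>"
    using n by (simp_all add: abs_less_iff)
  then have "t / real n \<in> {-\<delta>..\<delta>}"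
    using \<open>n > 0\<close> by (simp add: field_simps)
  then have "continuous_on UNIV (flow (t / real n))"
    by (rule continuous_on_flow_short[OF boxes])
  then have "continuous_on UNIV (flow (real n * (t / real n)))"
    unfolding flow_funpow by (rule continuous_on_funpow)
  then show ?thesis
    using \<open>n > 0\<close> by simp
qed

lemma continuous_on_flow_joint: "continuous_on UNIV (\<lambda>(t, x). flow t x)"
proof (rule continuous_on_UNIV_if_locally)
  fix p :: "real \<times> 'x"
  obtain t\<^sub>0 x\<^sub>0 where p: "p = (t\<^sub>0, x\<^sub>0)"
    by fastforce
  obtain \<rho> N \<phi> where box: "\<rho> > 0" "x\<^sub>0 \<in> N" "flow_box \<rho> N \<phi>"
    using flow_box_at by blast
  define A where "A = {t\<^sub>0 - \<rho><..<t\<^sub>0 + \<rho>} \<times> N"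
  have shift: "(\<lambda>q. (fst q - t\<^sub>0, snd q)) ` A \<subseteq> {-\<rho>..\<rho>} \<times> N"
    unfolding A_def by auto
  have "continuous_on A (\<lambda>q. \<phi> (fst q - t\<^sub>0, snd q))"
  proof (rule continuous_on_compose2[OF _ _ shift])
    show "continuous_on ({-\<rho>..\<rho>} \<times> N) \<phi>"
      using box(3) unfolding flow_box_def by blast
  qed (intro continuous_intros)
  then have "continuous_on A (\<lambda>q. flow t\<^sub>0 (\<phi> (fst q - t\<^sub>0, snd q)))"
    by (rule continuous_on_compose2[OF continuous_on_flow _ subset_UNIV])
  moreover have "flow t\<^sub>0 (\<phi> (fst q - t\<^sub>0, snd q)) = (\<lambda>(t, x). flow t x) q" if "q \<in> A" for q
  proof -
    have "\<phi> (fst q - t\<^sub>0, snd q) = flow (fst q - t\<^sub>0) (snd q)"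
      using shift that by (intro flow_eq_flow_box[OF box(3), symmetric]) auto
    then show ?thesis
      using fun_cong[OF flow_add[of t\<^sub>0 "fst q - t\<^sub>0"], of "snd q"] by (simp add: case_prod_beta)
  qed
  ultimately have "continuous_on A (\<lambda>(t, x). flow t x)"
    by (rule continuous_on_eq)
  moreover have "open A"
    using box(3) unfolding A_def flow_box_def by (simp add: open_Times)
  moreover have "p \<in> A"
    using p box(1,2) by (simp add: A_def)
  ultimately show "\<exists>N. open N \<and> p \<in> N \<and> continuous_on N (\<lambda>(t, x). flow t x)"
    by blast
qed

definition flow_saturation :: "'x set \<Rightarrow> 'x set" where
  "flow_saturation W = (\<Union>t. flow t ` W)"

lemma flow_image_eq_vimage: "flow t ` W = flow (-t) -` W"
proof -
  have inverse: "flow t (flow (-t) x) = x" "flow (-t) (flow t x) = x" for x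
    using fun_cong[OF flow_add[of t "-t"], of x] fun_cong[OF flow_add[of "-t" t], of x]
    by (simp_all add: flow_zero)
  show ?thesis
    using inverse by (auto intro: rev_image_eqI)
qed

lemma open_flow_saturation: "open W \<Longrightarrow> open (flow_saturation W)"
  unfolding flow_saturation_def flow_image_eq_vimage
  by (intro open_UN ballI open_vimage continuous_on_flow)

lemma flow_saturation_invariant: "flow s ` flow_saturation W = flow_saturation W"
proof -
  have "flow s ` flow t ` W = flow (s + t) ` W" for t
    by (simp add: flow_add image_comp)
  then have "flow s ` flow_saturation W = (\<Union>t. flow (s + t) ` W)"
    unfolding flow_saturation_def by (simp add: image_UN)
  also have "\<dots> = flow_saturation W"
    unfolding flow_saturation_def
  proof (intro equalityI UN_least)
    show "flow (s + t) ` W \<subseteq> (\<Union>t. flow t ` W)" for t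
      by blast
    show "flow t ` W \<subseteq> (\<Union>r. flow (s + r) ` W)" for t
      using UN_upper[of "t - s" UNIV "\<lambda>r. flow (s + r) ` W"] by simp
  qed
  finally show ?thesis .
qed

lemma inj_on_flow_saturation:
  assumes h: "homeomorphism V (dev ` V) dev h"
    and B: "convex B" "B \<subseteq> dev ` V"
  shows "inj_on dev (flow_saturation (V \<inter> dev -` B))"
proof (rule inj_onI)
  fix y\<^sub>1 y\<^sub>2
  assume "y\<^sub>1 \<in> flow_saturation (V \<inter> dev -` B)" "y\<^sub>2 \<in> flow_saturation (V \<inter> dev -` B)"
    and same_dev: "dev y\<^sub>1 = dev y\<^sub>2"
  then obtain t\<^sub>1 w\<^sub>1 t\<^sub>2 w\<^sub>2 where w: "w\<^sub>1 \<in> V" "dev w\<^sub>1 \<in> B" "w\<^sub>2 \<in> V" "dev w\<^sub>2 \<in> B"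
    and y: "y\<^sub>1 = flow t\<^sub>1 w\<^sub>1" "y\<^sub>2 = flow t\<^sub>2 w\<^sub>2"
    unfolding flow_saturation_def by blast
  define d where "d = t\<^sub>1 - t\<^sub>2"
  have dev_w\<^sub>2: "dev w\<^sub>2 = dev w\<^sub>1 + d *\<^sub>R v"
    using same_dev y by (simp add: dev_flow d_def algebra_simps)
  have "closed_segment (dev w\<^sub>1) (dev w\<^sub>1 + d *\<^sub>R v) \<subseteq> dev ` V"
    using closed_segment_subset[OF w(2) w(4) B(1)] B(2) dev_w\<^sub>2 by simp
  then have "flow d w\<^sub>1 = h (dev w\<^sub>2)"
    using flow_in_chart[OF h w(1)] dev_w\<^sub>2 by simp
  also have "\<dots> = w\<^sub>2"
    by (rule homeomorphism_apply1[OF h w(3)])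
  finally have "flow d w\<^sub>1 = w\<^sub>2" .
  then show "y\<^sub>1 = y\<^sub>2"
    using y fun_cong[OF flow_add[of t\<^sub>2 d], of w\<^sub>1] by (simp add: d_def)
qed

lemma invariant_chart:
  "\<exists>U. open U \<and> U \<noteq> {} \<and> (\<forall>t. flow t ` U = U) \<and> (\<exists>h. homeomorphism U (dev ` U) dev h)"
proof -
  fix x
  obtain V h where V: "open V" "x \<in> V" "open (dev ` V)" "homeomorphism V (dev ` V) dev h"
    using dev unfolding local_homeo_def by blast
  obtain r where r: "r > 0" "ball (dev x) r \<subseteq> dev ` V"
    using V(2,3) open_contains_ball by blast
  define W where "W = V \<inter> dev -` ball (dev x) r"
  define U where "U = flow_saturation W"
  have "open W"
    unfolding W_def by (intro open_Int V(1) open_vimage open_ball local_homeo_continuous[OF dev])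
  then have "open U"
    unfolding U_def by (rule open_flow_saturation)
  have "x \<in> W"
    using V(2) r(1) by (simp add: W_def)
  then have "flow 0 x \<in> U"
    unfolding U_def flow_saturation_def by (intro UN_I[of 0] UNIV_I imageI)
  then have "U \<noteq> {}"
    by blast
  have "inj_on dev U"
    unfolding U_def W_def by (rule inj_on_flow_saturation[OF V(4) convex_ball r(2)])
  then obtain h' where "homeomorphism U (dev ` U) dev h'"
    by (rule local_homeo_inj_on_homeomorphism[OF dev \<open>open U\<close>])
  moreover have "\<forall>t. flow t ` U = U"
    unfolding U_def by (simp add: flow_saturation_invariant)
  ultimately show ?thesis
    using \<open>open U\<close> \<open>U \<noteq> {}\<close> by blast
qed

end

theorem theorem2:
  fixes dev :: "'x::t2_space \<Rightarrow> real ^ 'n"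
    and G :: "('x \<Rightarrow> 'x) set"
    and L :: "('x \<Rightarrow> 'x) \<Rightarrow> real ^ 'n ^ 'n"
    and b :: "('x \<Rightarrow> 'x) \<Rightarrow> real ^ 'n"
    and v :: "real ^ 'n"
  assumes univ: "path_connected (UNIV :: 'x set)" "simply_connected (UNIV :: 'x set)"
    and dev: "local_homeo dev"
    and grp: "homeo_group G" "free_action G" "properly_discontinuous G" "cocompact G"
    and hol: "\<forall>g\<in>G. invertible (L g) \<and> (\<forall>x. dev (g x) = L g *v dev x + b g)"
    and par: "v \<noteq> 0" "\<forall>g\<in>G. L g *v v = v"
  shows "\<exists>\<Theta> :: real \<Rightarrow> 'x \<Rightarrow> 'x.
           continuous_on UNIV (\<lambda>(t, x). \<Theta> t x) \<and>
           \<Theta> 0 = id \<and> (\<forall>s t. \<Theta> (s + t) = \<Theta> s \<circ> \<Theta> t) \<and>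
           (\<forall>t. \<forall>g\<in>G. \<Theta> t \<circ> g = g \<circ> \<Theta> t) \<and>
           (\<forall>t x. dev (\<Theta> t x) = dev x + t *\<^sub>R v) \<and>
           (\<exists>U. open U \<and> U \<noteq> {} \<and> (\<forall>t. \<Theta> t ` U = U) \<and>
                (\<exists>h. homeomorphism U (dev ` U) dev h))"
proof -
  interpret parallel_affine_holonomy dev G L b v
    using dev grp(1,4) hol par by unfold_locales auto
  show ?thesis
  proof (intro exI[of _ flow] conjI allI ballI)
    show "continuous_on UNIV (\<lambda>(t, x). flow t x)"
      by (rule continuous_on_flow_joint)
    show "flow 0 = id"
      by (rule flow_zero)
    show "flow (s + t) = flow s \<circ> flow t" for s t
      by (rule flow_add)
    show "flow t \<circ> g = g \<circ> flow t" if "g \<in> G" for t g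
      using that by (rule flow_commute)
    show "dev (flow t x) = dev x + t *\<^sub>R v" for t x
      by (rule dev_flow)
    show "\<exists>U. open U \<and> U \<noteq> {} \<and> (\<forall>t. flow t ` U = U) \<and> (\<exists>h. homeomorphism U (dev ` U) dev h)"
      by (rule invariant_chart)
  qed
qed

end
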